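(* Let $p$ be a prime, $G=\mathbb{Z}_p$, and let $f,g$ be flows on $n$. Suppose there is a set of indices $I\subseteq[n]$ with $|I|=p-1$ such that $f(i)\neq g(i)$ for every $i\in I$. Then for any subset $I'\subseteq[n]$ disjoint from $I$ there exists a subset $I''\subseteq I$ such that $f$ and $g$ can be exchanged on $I'\cup I''$, i.e. $\sum_{i\in I'\cup I''}f(i)=\sum_{i\in I'\cup I''}g(i)$ in $\mathbb{Z}_p$.
   Context: For a finite abelian group $G$ and $n\in\mathbb{N}$, a flow on $n$ is a function $f:[n]\to G$, $[n]=\{1,\dots,n\}$, with $\sum_{i=1}^n f(i)=0$. Exchanging two flows $f,g$ on a set of indices $J$ means replacing them by $f',g'$ with $f'(i)=f(i)$, $g'(i)=g(i)$ for $i\notin J$ and $f'(i)=g(i)$, $g'(i)=f(i)$ for $i\in J$; this yields flows exactly when $\sum_{i\in J}f(i)=\sum_{i\in J}g(i)$. $\mathbb{Z}_p$ is the cyclic group of order $p$. *)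

theory Defs
  imports "HOL-Number_Theory.Number_Theory"
begin

text \<open>Elements of Z_p are represented by integers modulo p; equality in Z_p is
  congruence modulo p. A flow on n is a function on [n] = {1..n} summing to 0 in Z_p.\<close>

definition zp_flow :: "nat \<Rightarrow> nat \<Rightarrow> (nat \<Rightarrow> int) \<Rightarrow> bool" where
  "zp_flow p n f \<longleftrightarrow> [(\<Sum>i\<in>{1..n}. f i) = 0] (mod int p)"

end

theory Submission
  imports Defs
begin

text \<open>Only the differences d i = f i - g i matter: exchanging on J is possible iff the sum of d
  over J vanishes mod p. On I every d i is a unit mod p, and adjoining one unit to a set of
  indices enlarges its set of subset sums unless that set is already closed under adding the
  unit, in which case it is all of Z_p. Hence the p - 1 indices of I realise every residue as a
  subset sum, in particular minus the sum of d over I'.\<close>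

lemma residues_subset_if_shift_closed:
  fixes S :: "int set" and q a :: int
  assumes "0 \<in> S" and closed: "\<forall>x\<in>S. (x + a) mod q \<in> S" and "coprime a q" and "q > 0"
  shows "{0..<q} \<subseteq> S"
proof
  fix t assume t: "t \<in> {0..<q}"
  have multiples: "(int k * a) mod q \<in> S" for k :: nat
  proof (induction k)
    case 0
    then show ?case using \<open>0 \<in> S\<close> by simp
  next
    case (Suc k)
    have "(int (Suc k) * a) mod q = ((int k * a) mod q + a) mod q"
      by (simp add: algebra_simps mod_add_right_eq)
    then show ?case using Suc closed by metis
  qed
  obtain b where b: "[a * b = 1] (mod q)"
    using cong_solve_coprime_int[OF \<open>coprime a q\<close>] by blast
  define k where "k = nat ((t * b) mod q)"
  have "int k = (t * b) mod q"
    unfolding k_def using \<open>q > 0\<close> by simp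
  then have "[int k * a = t * b * a] (mod q)"
    by (simp add: cong_def mod_mult_left_eq)
  moreover have "[t * b * a = t * 1] (mod q)"
    using b by (metis cong_scalar_left mult.assoc mult.commute)
  ultimately have "[int k * a = t] (mod q)"
    by (metis cong_trans mult_1_right)
  then have "(int k * a) mod q = t"
    using t by (simp add: cong_def)
  then show "t \<in> S" using multiples by metis
qed

definition subset_sums_mod :: "int \<Rightarrow> (nat \<Rightarrow> int) \<Rightarrow> nat set \<Rightarrow> int set" where
  "subset_sums_mod q d J = (\<lambda>K. (\<Sum>i\<in>K. d i) mod q) ` Pow J"

lemma subset_sums_mod_subset: "q > 0 \<Longrightarrow> subset_sums_mod q d J \<subseteq> {0..<q}"
  unfolding subset_sums_mod_def by auto

lemma zero_in_subset_sums_mod: "0 \<in> subset_sums_mod q d J"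
  unfolding subset_sums_mod_def by (rule image_eqI[of _ _ "{}"]) auto

lemma subset_sums_mod_insert:
  assumes "finite J" and "a \<notin> J"
  shows "subset_sums_mod q d (insert a J)
           = subset_sums_mod q d J \<union> (\<lambda>x. (x + d a) mod q) ` subset_sums_mod q d J"
proof -
  have "(\<lambda>K. (\<Sum>i\<in>K. d i) mod q) ` insert a ` Pow J
          = (\<lambda>x. (x + d a) mod q) ` subset_sums_mod q d J"
    unfolding subset_sums_mod_def image_image
  proof (rule image_cong[OF refl])
    fix K assume "K \<in> Pow J"
    then have "a \<notin> K" "finite K" using assms finite_subset by auto
    then show "(\<Sum>i\<in>insert a K. d i) mod q = ((\<Sum>i\<in>K. d i) mod q + d a) mod q"
      by (simp add: mod_add_right_eq add.commute)
  qed
  then show ?thesis unfolding subset_sums_mod_def Pow_insert image_Un by simp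
qed

lemma card_subset_sums_mod_ge:
  fixes q :: int
  assumes "finite J" and "\<forall>i\<in>J. coprime (d i) q" and "q > 0"
  shows "min (nat q) (card J + 1) \<le> card (subset_sums_mod q d J)"
  using assms
proof (induction J rule: finite_induct)
  case empty
  then show ?case by (simp add: subset_sums_mod_def)
next
  case (insert a J)
  let ?S = "subset_sums_mod q d J"
  let ?shift = "\<lambda>x. (x + d a) mod q"
  have fin: "finite ?S"
    using subset_sums_mod_subset[OF \<open>q > 0\<close>] finite_subset by blast
  have ins: "subset_sums_mod q d (insert a J) = ?S \<union> ?shift ` ?S"
    using subset_sums_mod_insert[OF insert(1,2)] .
  show ?case
  proof (cases "?shift ` ?S \<subseteq> ?S")
    case True
    have "{0..<q} \<subseteq> ?S"
      by (rule residues_subset_if_shift_closed[OF zero_in_subset_sums_mod])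
        (use True insert.prems in auto)
    then have "subset_sums_mod q d (insert a J) = {0..<q}"
      using ins True subset_sums_mod_subset[OF \<open>q > 0\<close>, of d J] by auto
    then show ?thesis by simp
  next
    case False
    then obtain y where y: "y \<in> ?shift ` ?S" "y \<notin> ?S" by blast
    have "card (insert y ?S) \<le> card (subset_sums_mod q d (insert a J))"
      using ins y fin by (intro card_mono) auto
    then have "card ?S + 1 \<le> card (subset_sums_mod q d (insert a J))"
      using y fin by simp
    then show ?thesis using insert by simp
  qed
qed

lemma exists_subset_sum_cong:
  fixes q t :: int and d :: "nat \<Rightarrow> int"
  assumes "finite J" and "\<forall>i\<in>J. coprime (d i) q" and "q > 0" and "nat q \<le> card J + 1"
  obtains K where "K \<subseteq> J" and "[(\<Sum>i\<in>K. d i) = t] (mod q)"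
proof -
  have "card {0..<q} \<le> card (subset_sums_mod q d J)"
    using card_subset_sums_mod_ge[OF assms(1-3)] assms(4) by simp
  then have "subset_sums_mod q d J = {0..<q}"
    using subset_sums_mod_subset[OF \<open>q > 0\<close>] by (metis card_seteq finite_atLeastLessThan_int)
  moreover have "t mod q \<in> {0..<q}" using \<open>q > 0\<close> by simp
  ultimately obtain K where "K \<subseteq> J" "(\<Sum>i\<in>K. d i) mod q = t mod q"
    unfolding subset_sums_mod_def by (metis (no_types, lifting) PowD imageE)
  then show thesis using that by (simp add: cong_def)
qed

theorem lemma3p1:
  fixes p n :: nat and f g :: "nat \<Rightarrow> int" and I I' :: "nat set"
  assumes "prime p"
    and "zp_flow p n f" and "zp_flow p n g"
    and "I \<subseteq> {1..n}" and "card I = p - 1"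
    and "\<forall>i\<in>I. \<not> [f i = g i] (mod int p)"
    and "I' \<subseteq> {1..n}" and "I \<inter> I' = {}"
  shows "\<exists>I''. I'' \<subseteq> I \<and>
           [(\<Sum>i\<in>I' \<union> I''. f i) = (\<Sum>i\<in>I' \<union> I''. g i)] (mod int p)"
proof -
  define d where "d i = f i - g i" for i
  have "finite I" "finite I'" using assms(4,7) finite_subset by auto
  have units: "\<forall>i\<in>I. coprime (d i) (int p)"
  proof
    fix i assume "i \<in> I"
    then have "\<not> int p dvd d i" using assms(6) by (simp add: d_def cong_iff_dvd_diff)
    then show "coprime (d i) (int p)"
      using assms(1) prime_imp_coprime[of "int p" "d i"] coprime_commute by auto
  qed
  have "int p > 0" "nat (int p) \<le> card I + 1"
    using assms(1,5) prime_gt_0_nat by auto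
  then obtain K where K: "K \<subseteq> I" "[(\<Sum>i\<in>K. d i) = - (\<Sum>i\<in>I'. d i)] (mod int p)"
    using exists_subset_sum_cong[OF \<open>finite I\<close> units] by blast
  have "I' \<inter> K = {}" "finite K" using K(1) assms(8) \<open>finite I\<close> finite_subset by auto
  then have "(\<Sum>i\<in>I' \<union> K. d i) = (\<Sum>i\<in>I'. d i) + (\<Sum>i\<in>K. d i)"
    using \<open>finite I'\<close> by (simp add: sum.union_disjoint)
  also have "[\<dots> = (\<Sum>i\<in>I'. d i) + - (\<Sum>i\<in>I'. d i)] (mod int p)"
    using K(2) by (rule cong_add[OF cong_refl])
  finally have "[(\<Sum>i\<in>I' \<union> K. d i) = 0] (mod int p)" by simp
  then show ?thesis
    using K(1) by (auto simp: d_def sum_subtractf cong_iff_dvd_diff cong_0_iff)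
qed

end
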